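(* Let $\bm\mu=(\mu_1,\dots,\mu_r)$ be finite positive Borel measures on the unit circle with infinite supports, fix the square-root branch as in the context, let $\bm n\in\mathbb N^r$ and $\tau\in\partial\mathbb D$. Then $\bm n$ is $\phi$-normal if and only if there is no nonzero $X\in\operatorname{span}\{z^p\}_{p=-(|\bm n|-1)/2}^{(|\bm n|-1)/2}$ such that $X(z)=\tau\overline{X(1/\bar z)}$ and $\int X(z)z^{-p}\,d\mu_j(z)=0$ for $p=-(n_j-1)/2,\dots,(n_j-1)/2$, $j=1,\dots,r$.
   Context: $\partial\mathbb D=\{|z|=1\}$. Fix $t_0\in\mathbb R$ and let $z^{k/2}=|z|^{k/2}\exp(ik\arg_{[t_0,t_0+2\pi)}(z)/2)$ for $k\in\mathbb Z$. $|\bm n|=\sum_j n_j$; $\operatorname{span}\{z^p\}_{p=a}^b$ ($b-a\in\mathbb Z$) is the span of $z^a,z^{a+1},\dots,z^b$ (zero space if $a>b$; the range of $p$ in an orthogonality condition is empty when $n_j=0$). $\bm n$ is $\phi$-normal if there is a unique $\phi\in\operatorname{span}\{z^p\}_{p=-|\bm n|/2}^{|\bm n|/2}$ with coefficient of $z^{|\bm n|/2}$ equal to $1$ and $\int\phi(z)z^{-p}\,d\mu_j(z)=0$ for $p=-n_j/2,\dots,n_j/2-1$, $j=1,\dots,r$ (by convention $\bm 0$ is $\phi$-normal). *)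

theory Defs
  imports "HOL-Analysis.Analysis"
begin

text \<open>The argument of z chosen in the interval [t0, t0 + 2 pi):
  it is the representative of Arg z (which lies in (-pi, pi]) modulo 2 pi in that interval.\<close>
definition arg_branch :: "real \<Rightarrow> complex \<Rightarrow> real" where
  "arg_branch t0 z = t0 + 2 * pi * frac ((Arg z - t0) / (2 * pi))"

text \<open>hpow t0 k z is z^(k/2) = |z|^(k/2) exp(i k arg(z) / 2) with the branch above.\<close>
definition hpow :: "real \<Rightarrow> int \<Rightarrow> complex \<Rightarrow> complex" where
  "hpow t0 k z = complex_of_real (norm z powr (real_of_int k / 2))
                 * exp (\<i> * complex_of_real (real_of_int k * arg_branch t0 z / 2))"

text \<open>span of z^(lo/2), z^((lo+2)/2), ..., z^((lo+2(m-1))/2)  (m functions; zero space if m = 0).\<close>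
definition hspan :: "real \<Rightarrow> int \<Rightarrow> nat \<Rightarrow> (complex \<Rightarrow> complex) set" where
  "hspan t0 lo m = {f. \<exists>c :: nat \<Rightarrow> complex. f = (\<lambda>z. \<Sum>i<m. c i * hpow t0 (lo + 2 * int i) z)}"

definition msupport :: "complex measure \<Rightarrow> complex set" where
  "msupport M = {z. \<forall>e>0. emeasure M (ball z e) > 0}"

definition circle_measure :: "complex measure \<Rightarrow> bool" where
  "circle_measure M \<longleftrightarrow> sets M = sets borel \<and> finite_measure M
     \<and> emeasure M (- sphere 0 1) = 0 \<and> infinite (msupport M)"

definition total :: "nat \<Rightarrow> (nat \<Rightarrow> nat) \<Rightarrow> nat" where
  "total r ns = (\<Sum>j<r. ns j)"

text \<open>With N = |n|, phi = sum_{i=0}^N c_i z^((2i-N)/2); the coefficient of z^(N/2) is c_N.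
  Orthogonality: p = (2i - n_j)/2 for i = 0..n_j-1, so z^(-p) = z^((n_j - 2i)/2).
  By convention the zero multi-index is phi-normal.\<close>
definition phi_normal :: "real \<Rightarrow> nat \<Rightarrow> (nat \<Rightarrow> complex measure) \<Rightarrow> (nat \<Rightarrow> nat) \<Rightarrow> bool" where
  "phi_normal t0 r mus ns \<longleftrightarrow> total r ns = 0 \<or>
     (\<exists>!c :: nat \<Rightarrow> complex. (\<forall>i > total r ns. c i = 0) \<and> c (total r ns) = 1 \<and>
        (\<forall>j<r. \<forall>i<ns j.
           integral\<^sup>L (mus j) (\<lambda>z. (\<Sum>k\<le>total r ns. c k * hpow t0 (2 * int k - int (total r ns)) z)
                                  * hpow t0 (int (ns j) - 2 * int i) z) = 0))"

end

(*
  Write X = sum_{b<N} c_b z^((1-N+2b)/2) and pair it with the N test functions z^((n_j-1-2i)/2).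
  Both sides then become statements about one N x N matrix of moments of the mu_j:
  phi-normality (after moving half a unit of exponent from phi to the test functions) says
  that the monic system with this matrix has exactly one solution, i.e. that the matrix is
  nonsingular; the right-hand side says that its kernel contains no nonzero tau-symmetric X.
  The kernel is invariant under the antilinear involution sigma X (z) = tau cnj (X (1 / cnj z)):
  on the circle sigma X = tau cnj X, and the test exponents are symmetric under negation.
  So a nonzero X in the kernel yields the nonzero sigma-fixed element X + sigma X, or i X
  if X + sigma X = 0.
*)

theory Submission
  imports Defs "HOL-Computational_Algebra.Polynomial" "Jordan_Normal_Form.Determinant"
begin

lemma borel_measurable_Arg [measurable]: "Arg \<in> borel_measurable borel"
proof -
  have "Arg = (\<lambda>z. if z \<in> \<real> then (if 0 \<le> Re z then 0 else pi) else Arg z)"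
    by (auto simp: Arg_real)
  also have "\<dots> \<in> borel_measurable borel"
  proof (subst measurable_If_restrict_space_iff)
    show "{z :: complex \<in> space borel. z \<in> \<real>} \<in> sets borel"
      using borel_closed[OF closed_complex_Reals] by simp
    have "continuous_on (- \<real>) Arg"
      by (rule continuous_on_subset[OF continuous_on_Arg])
        (auto simp: complex_nonpos_Reals_iff complex_is_Real_iff)
    then show "(\<lambda>z. if 0 \<le> Re z then 0 else pi) \<in> borel_measurable (restrict_space borel {z. z \<in> \<real>})
      \<and> Arg \<in> borel_measurable (restrict_space borel {z. z \<notin> \<real>})"
      by (auto intro: measurable_restrict_space1 borel_measurable_continuous_on_restrict simp: Compl_eq)
  qed
  finally show ?thesis .
qed

lemma borel_measurable_hpow [measurable]: "hpow t0 k \<in> borel_measurable borel"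
proof -
  have "frac \<in> borel_measurable (borel :: real measure)"
    unfolding frac_def by measurable
  then show ?thesis
    unfolding hpow_def arg_branch_def by measurable
qed

lemma borel_measurable_cnj [measurable (raw)]:
  "f \<in> borel_measurable M \<Longrightarrow> (\<lambda>x. cnj (f x)) \<in> borel_measurable M"
  by (rule borel_measurable_continuous_on[OF continuous_on_cnj[OF continuous_on_id]])

lemma hpow_add: "z \<noteq> 0 \<Longrightarrow> hpow t0 (a + b) z = hpow t0 a z * hpow t0 b z"
  unfolding hpow_def
  by (simp add: powr_add add_divide_distrib distrib_right mult_exp_exp algebra_simps flip: exp_add)

lemma hpow_mult_exponent: "z \<noteq> 0 \<Longrightarrow> hpow t0 (int n * k) z = hpow t0 k z ^ n"
proof (induction n)
  case 0
  then show ?case by (simp add: hpow_def)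
next
  case (Suc n)
  then show ?case by (simp add: algebra_simps hpow_add)
qed

lemma hpow_nonzero: "z \<noteq> 0 \<Longrightarrow> hpow t0 k z \<noteq> 0"
  unfolding hpow_def by simp

lemma norm_hpow_of_real_2: "x > 0 \<Longrightarrow> norm (hpow t0 2 (complex_of_real x)) = x"
  unfolding hpow_def by (simp add: norm_mult)

lemma cnj_hpow_reflect: "cnj (hpow t0 k (1 / cnj z)) = hpow t0 (- k) z"
proof (cases "z = 0")
  case True
  then show ?thesis by (simp add: hpow_def)
next
  case False
  have "Arg (1 / cnj z) = Arg z"
    by (simp add: divide_inverse Arg_inverse Arg_cnj Reals_cnj_iff)
  then have "arg_branch t0 (1 / cnj z) = arg_branch t0 z"
    unfolding arg_branch_def by simp
  moreover have "norm (1 / cnj z) powr (k / 2) = norm z powr (- k / 2)"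
    using False by (simp add: norm_divide powr_minus_divide powr_divide)
  ultimately show ?thesis
    unfolding hpow_def by (simp add: exp_cnj)
qed

lemma inverse_cnj_circle:
  assumes "norm z = 1"
  shows "1 / cnj z = z"
proof -
  have "cnj z \<noteq> 0"
    using assms by auto
  with complex_norm_square[of z] assms show ?thesis
    by (simp add: field_simps)
qed

lemma cnj_hpow_circle: "norm z = 1 \<Longrightarrow> cnj (hpow t0 k z) = hpow t0 (- k) z"
  using cnj_hpow_reflect[of t0 k z] by (simp add: inverse_cnj_circle)

lemma norm_hpow_circle: "norm z = 1 \<Longrightarrow> norm (hpow t0 k z) = 1"
  unfolding hpow_def by (simp add: norm_exp)

lemma hpow_sum_eq_zero_iff:
  "(\<lambda>z. \<Sum>i<m. c i * hpow t0 (lo + 2 * int i) z) = (\<lambda>z. 0) \<longleftrightarrow> (\<forall>i<m. c i = 0)"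
proof
  assume zero: "(\<lambda>z. \<Sum>i<m. c i * hpow t0 (lo + 2 * int i) z) = (\<lambda>z. 0)"
  define p where "p = (\<Sum>i<m. monom (c i) i)"
  have root: "poly p (hpow t0 2 (of_real x)) = 0" if "x > 0" for x
  proof -
    have x: "complex_of_real x \<noteq> 0"
      using that by simp
    have "hpow t0 (lo + 2 * int i) (of_real x) = hpow t0 lo (of_real x) * hpow t0 2 (of_real x) ^ i"
      for i
      using hpow_add[OF x, of t0 lo "2 * int i"] hpow_mult_exponent[OF x, of t0 i 2]
      by (simp add: mult.commute)
    then have "hpow t0 lo (of_real x) * poly p (hpow t0 2 (of_real x))
        = (\<Sum>i<m. c i * hpow t0 (lo + 2 * int i) (of_real x))"
      by (simp add: p_def poly_sum poly_monom sum_distrib_left mult.left_commute)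
    also have "\<dots> = 0"
      using fun_cong[OF zero] by simp
    finally show ?thesis
      using hpow_nonzero[OF x] by simp
  qed
  have "p = 0"
  proof (rule ccontr)
    assume "p \<noteq> 0"
    then have "finite (norm ` {w. poly p w = 0})"
      using poly_roots_finite by blast
    moreover have "{0<..} \<subseteq> norm ` {w. poly p w = 0}"
      using root norm_hpow_of_real_2 by (force simp: image_iff)
    ultimately show False
      using infinite_Ioi finite_subset by blast
  qed
  moreover have "coeff p i = c i" if "i < m" for i
    using that by (simp add: p_def coeff_sum coeff_monom)
  ultimately show "\<forall>i<m. c i = 0"
    by simp
qed simp

lemma hspan_add:
  assumes "X \<in> hspan t0 lo m" and "Y \<in> hspan t0 lo m"
  shows "(\<lambda>z. X z + Y z) \<in> hspan t0 lo m"
proof -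
  obtain c d where "X = (\<lambda>z. \<Sum>i<m. c i * hpow t0 (lo + 2 * int i) z)"
    and "Y = (\<lambda>z. \<Sum>i<m. d i * hpow t0 (lo + 2 * int i) z)"
    using assms unfolding hspan_def by blast
  then have "(\<lambda>z. X z + Y z) = (\<lambda>z. \<Sum>i<m. (c i + d i) * hpow t0 (lo + 2 * int i) z)"
    by (simp add: distrib_right sum.distrib)
  then show ?thesis
    unfolding hspan_def by (intro CollectI exI) assumption
qed

lemma hspan_scale:
  assumes "X \<in> hspan t0 lo m"
  shows "(\<lambda>z. a * X z) \<in> hspan t0 lo m"
proof -
  obtain c where "X = (\<lambda>z. \<Sum>i<m. c i * hpow t0 (lo + 2 * int i) z)"
    using assms unfolding hspan_def by blast
  then have "(\<lambda>z. a * X z) = (\<lambda>z. \<Sum>i<m. (a * c i) * hpow t0 (lo + 2 * int i) z)"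
    by (simp add: sum_distrib_left mult.assoc)
  then show ?thesis
    unfolding hspan_def by (intro CollectI exI) assumption
qed

lemma hspan_reflect:
  assumes "X \<in> hspan t0 (1 - int m) m"
  shows "(\<lambda>z. \<tau> * cnj (X (1 / cnj z))) \<in> hspan t0 (1 - int m) m"
proof -
  obtain c where X: "X = (\<lambda>z. \<Sum>i<m. c i * hpow t0 (1 - int m + 2 * int i) z)"
    using assms unfolding hspan_def by blast
  have "(\<lambda>z. \<tau> * cnj (X (1 / cnj z)))
      = (\<lambda>z. \<Sum>i<m. \<tau> * cnj (c (m - Suc i)) * hpow t0 (1 - int m + 2 * int i) z)"
  proof
    fix z
    have "\<tau> * cnj (X (1 / cnj z)) = (\<Sum>i<m. \<tau> * cnj (c i) * hpow t0 (- (1 - int m + 2 * int i)) z)"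
      unfolding X by (simp add: sum_distrib_left cnj_hpow_reflect mult.assoc)
    also have "\<dots> = (\<Sum>i<m. \<tau> * cnj (c (m - Suc i)) * hpow t0 (1 - int m + 2 * int i) z)"
      by (subst sum.nat_diff_reindex[symmetric]) (auto intro!: sum.cong simp: of_nat_diff algebra_simps)
    finally show "\<tau> * cnj (X (1 / cnj z)) = \<dots>" .
  qed
  then show ?thesis
    unfolding hspan_def by (intro CollectI exI) assumption
qed

lemma borel_measurable_hspan: "X \<in> hspan t0 lo m \<Longrightarrow> X \<in> borel_measurable borel"
  unfolding hspan_def by auto

lemma AE_circle_measure_norm:
  assumes "circle_measure M"
  shows "AE z in M. norm z = 1"
proof (rule AE_I[of _ _ "- sphere 0 1"])
  show "emeasure M (- sphere 0 1) = 0" and "- sphere 0 1 \<in> sets M"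
    using assms borel_closed[of "sphere (0 :: complex) 1"] unfolding circle_measure_def by auto
qed auto

lemma measurable_circle_measure:
  "circle_measure M \<Longrightarrow> f \<in> borel_measurable borel \<Longrightarrow> f \<in> borel_measurable M"
  unfolding circle_measure_def using measurable_cong_sets by blast

lemma integrable_circle_measure_bounded:
  fixes f :: "complex \<Rightarrow> complex"
  assumes M: "circle_measure M" and f: "f \<in> borel_measurable borel"
    and bound: "\<And>z. norm z = 1 \<Longrightarrow> norm (f z) \<le> B"
  shows "integrable M f"
proof (rule finite_measure.integrable_const_bound)
  show "finite_measure M"
    using M unfolding circle_measure_def by blast
  show "AE z in M. norm (f z) \<le> B"
    using AE_circle_measure_norm[OF M] by eventually_elim (rule bound)
  show "f \<in> borel_measurable M"
    by (rule measurable_circle_measure[OF M f])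
qed

lemma integrable_hpow: "circle_measure M \<Longrightarrow> integrable M (hpow t0 k)"
  by (rule integrable_circle_measure_bounded[where B = 1]) (auto simp: norm_hpow_circle)

lemma integrable_hspan_mult_hpow:
  assumes M: "circle_measure M" and X: "X \<in> hspan t0 lo m"
  shows "integrable M (\<lambda>z. X z * hpow t0 k z)"
proof -
  obtain c where c: "X = (\<lambda>z. \<Sum>i<m. c i * hpow t0 (lo + 2 * int i) z)"
    using X unfolding hspan_def by blast
  show ?thesis
  proof (rule integrable_circle_measure_bounded[OF M, where B = "\<Sum>i<m. norm (c i)"])
    show "(\<lambda>z. X z * hpow t0 k z) \<in> borel_measurable borel"
      using borel_measurable_hspan[OF X] by measurable
    fix z :: complex
    assume "norm z = 1"
    then show "norm (X z * hpow t0 k z) \<le> (\<Sum>i<m. norm (c i))"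
      unfolding c by (auto intro: order.trans[OF norm_sum] simp: norm_mult norm_hpow_circle)
  qed
qed

lemma integral_hpow_combination:
  assumes M: "circle_measure M"
  shows "integral\<^sup>L M (\<lambda>z. (\<Sum>i\<in>I. c i * hpow t0 (a i) z) * hpow t0 m z)
       = (\<Sum>i\<in>I. c i * integral\<^sup>L M (hpow t0 (a i + m)))"
proof -
  have "integral\<^sup>L M (\<lambda>z. (\<Sum>i\<in>I. c i * hpow t0 (a i) z) * hpow t0 m z)
      = integral\<^sup>L M (\<lambda>z. \<Sum>i\<in>I. c i * hpow t0 (a i + m) z)"
  proof (rule integral_cong_AE)
    show "(\<lambda>z. (\<Sum>i\<in>I. c i * hpow t0 (a i) z) * hpow t0 m z) \<in> borel_measurable M"
      and "(\<lambda>z. \<Sum>i\<in>I. c i * hpow t0 (a i + m) z) \<in> borel_measurable M"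
      by (rule measurable_circle_measure[OF M], measurable)+
    show "AE z in M. (\<Sum>i\<in>I. c i * hpow t0 (a i) z) * hpow t0 m z = (\<Sum>i\<in>I. c i * hpow t0 (a i + m) z)"
      using AE_circle_measure_norm[OF M]
    proof eventually_elim
      case (elim z)
      then have "z \<noteq> 0"
        by auto
      then show ?case
        by (simp add: sum_distrib_right hpow_add mult.assoc)
    qed
  qed
  also have "\<dots> = (\<Sum>i\<in>I. c i * integral\<^sup>L M (hpow t0 (a i + m)))"
    using integrable_hpow[OF M] by (subst Bochner_Integration.integral_sum) auto
  finally show ?thesis .
qed

lemma integral_reflect_mult_hpow:
  assumes M: "circle_measure M" and X: "X \<in> borel_measurable borel"
  shows "integral\<^sup>L M (\<lambda>z. \<tau> * cnj (X (1 / cnj z)) * hpow t0 k z)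
       = \<tau> * cnj (integral\<^sup>L M (\<lambda>z. X z * hpow t0 (- k) z))"
proof -
  have "integral\<^sup>L M (\<lambda>z. \<tau> * cnj (X (1 / cnj z)) * hpow t0 k z)
      = integral\<^sup>L M (\<lambda>z. \<tau> * cnj (X z * hpow t0 (- k) z))"
  proof (rule integral_cong_AE)
    show "(\<lambda>z. \<tau> * cnj (X (1 / cnj z)) * hpow t0 k z) \<in> borel_measurable M"
      and "(\<lambda>z. \<tau> * cnj (X z * hpow t0 (- k) z)) \<in> borel_measurable M"
      using X by (auto intro!: measurable_circle_measure[OF M])
    show "AE z in M. \<tau> * cnj (X (1 / cnj z)) * hpow t0 k z = \<tau> * cnj (X z * hpow t0 (- k) z)"
      using AE_circle_measure_norm[OF M]
      by eventually_elim (simp add: inverse_cnj_circle cnj_hpow_circle)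
  qed
  then show ?thesis
    by (simp del: complex_cnj_mult)
qed

lemma exists_nonzero_fixed_point_antilinear_involution:
  fixes V :: "('a \<Rightarrow> complex) set" and \<sigma> :: "('a \<Rightarrow> complex) \<Rightarrow> 'a \<Rightarrow> complex"
  assumes add_closed: "\<And>f g. f \<in> V \<Longrightarrow> g \<in> V \<Longrightarrow> (\<lambda>x. f x + g x) \<in> V"
    and scale_closed: "\<And>f. f \<in> V \<Longrightarrow> (\<lambda>x. \<i> * f x) \<in> V"
    and \<sigma>_closed: "\<And>f. f \<in> V \<Longrightarrow> \<sigma> f \<in> V"
    and \<sigma>_add: "\<And>f g. \<sigma> (\<lambda>x. f x + g x) = (\<lambda>x. \<sigma> f x + \<sigma> g x)"
    and \<sigma>_scale: "\<And>f. \<sigma> (\<lambda>x. \<i> * f x) = (\<lambda>x. - \<i> * \<sigma> f x)"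
    and \<sigma>_involution: "\<And>f. f \<in> V \<Longrightarrow> \<sigma> (\<sigma> f) = f"
    and f: "f \<in> V" "f \<noteq> (\<lambda>x. 0)"
  shows "\<exists>g\<in>V. g \<noteq> (\<lambda>x. 0) \<and> \<sigma> g = g"
proof (cases "(\<lambda>x. f x + \<sigma> f x) = (\<lambda>x. 0)")
  case False
  have "\<sigma> (\<lambda>x. f x + \<sigma> f x) = (\<lambda>x. f x + \<sigma> f x)"
    using \<sigma>_involution[OF f(1)] by (simp add: \<sigma>_add add.commute)
  with False show ?thesis
    using add_closed \<sigma>_closed f(1) by blast
next
  case True
  then have "\<sigma> f = (\<lambda>x. - f x)"
    by (simp add: fun_eq_iff eq_neg_iff_add_eq_0 add.commute)
  then have "\<sigma> (\<lambda>x. \<i> * f x) = (\<lambda>x. \<i> * f x)"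
    by (simp add: \<sigma>_scale)
  moreover have "(\<lambda>x. \<i> * f x) \<noteq> (\<lambda>x. 0)"
    using f(2) by (simp add: fun_eq_iff)
  ultimately show ?thesis
    using scale_closed f(1) by blast
qed

lemma square_system_solvable_if_injective:
  fixes Q :: "'s \<Rightarrow> nat \<Rightarrow> 'a :: field"
  assumes S: "finite S" "card S = N"
    and inj: "\<forall>c. (\<forall>s\<in>S. (\<Sum>k<N. c k * Q s k) = 0) \<longrightarrow> (\<forall>k<N. c k = 0)"
  shows "\<exists>c. \<forall>s\<in>S. (\<Sum>k<N. c k * Q s k) = y s"
proof -
  obtain g where g: "bij_betw g {..<N} S"
    using finite_same_card_bij[of "{..<N}" S] S by auto
  define A where "A = Matrix.mat N N (\<lambda>(a, k). Q (g a) k)"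
  have A: "A \<in> carrier_mat N N"
    unfolding A_def by simp
  have mult_A: "(A *\<^sub>v v) $ a = (\<Sum>k<N. v $ k * Q (g a) k)" if "v \<in> carrier_vec N" "a < N" for v a
    using that by (auto simp: A_def scalar_prod_def atLeast0LessThan mult.commute intro: sum.cong)
  have "det A \<noteq> 0"
  proof
    assume "det A = 0"
    then obtain v where v: "v \<in> carrier_vec N" "v \<noteq> 0\<^sub>v N" "A *\<^sub>v v = 0\<^sub>v N"
      using det_0_iff_vec_prod_zero[OF A] by blast
    have "\<forall>s\<in>S. (\<Sum>k<N. v $ k * Q s k) = 0"
    proof
      fix s assume "s \<in> S"
      then obtain a where "a < N" "s = g a"
        using g by (auto simp: bij_betw_def)
      then show "(\<Sum>k<N. v $ k * Q s k) = 0"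
        using mult_A[OF v(1)] v(3) by simp
    qed
    then have "\<forall>k<N. v $ k = 0"
      using inj by simp
    then have "v = 0\<^sub>v N"
      using v(1) by (auto intro: eq_vecI)
    with v(2) show False ..
  qed
  then obtain B where B: "B \<in> carrier_mat N N" "A * B = 1\<^sub>m N"
    using det_non_zero_imp_unit[OF A \<open>det A \<noteq> 0\<close>, of undefined] by (auto simp: Units_def ring_mat_simps)
  define yv where "yv = Matrix.vec N (\<lambda>a. y (g a))"
  define x where "x = B *\<^sub>v yv"
  have x: "x \<in> carrier_vec N"
    using B(1) by (simp add: x_def yv_def)
  have "A *\<^sub>v x = yv"
    using A B by (simp add: x_def yv_def assoc_mult_mat_vec[symmetric])
  show ?thesis
  proof (intro exI ballI)
    fix s assume "s \<in> S"
    then obtain a where "a < N" "s = g a"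
      using g by (auto simp: bij_betw_def)
    then show "(\<Sum>k<N. x $ k * Q s k) = y s"
      using mult_A[OF x] \<open>A *\<^sub>v x = yv\<close> by (simp add: yv_def)
  qed
qed

lemma unique_monic_solution_iff_injective:
  fixes Q :: "'s \<Rightarrow> nat \<Rightarrow> 'a :: field"
  assumes S: "finite S" "card S = N"
  shows "(\<exists>!c. (\<forall>k>N. c k = 0) \<and> c N = 1 \<and> (\<forall>s\<in>S. (\<Sum>k\<le>N. c k * Q s k) = 0))
     \<longleftrightarrow> (\<forall>c. (\<forall>s\<in>S. (\<Sum>k<N. c k * Q s k) = 0) \<longrightarrow> (\<forall>k<N. c k = 0))"
    (is "(\<exists>!c. ?monic c) \<longleftrightarrow> (\<forall>c. ?kernel c \<longrightarrow> _)")
proof -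
  have monic_iff: "?monic c \<longleftrightarrow>
      (\<forall>k>N. c k = 0) \<and> c N = 1 \<and> (\<forall>s\<in>S. (\<Sum>k<N. c k * Q s k) = - Q s N)" for c
    by (auto simp: lessThan_Suc_atMost[symmetric] eq_neg_iff_add_eq_0)
  show ?thesis
  proof
    assume "\<exists>!c. ?monic c"
    then obtain c0 where c0: "?monic c0" and unique: "\<forall>c. ?monic c \<longrightarrow> c = c0"
      by (rule ex1E)
    show "\<forall>c. ?kernel c \<longrightarrow> (\<forall>k<N. c k = 0)"
    proof (intro allI impI)
      fix c k
      assume "?kernel c" and "k < N"
      define d where "d k = (if k < N then c0 k + c k else c0 k)" for k
      have "?monic d"
        unfolding monic_iff using c0 \<open>?kernel c\<close> by (simp add: monic_iff d_def distrib_right sum.distrib)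
      then have "d = c0"
        by (rule unique[rule_format])
      then have "d k = c0 k"
        by simp
      then show "c k = 0"
        using \<open>k < N\<close> by (simp add: d_def)
    qed
  next
    assume inj: "\<forall>c. ?kernel c \<longrightarrow> (\<forall>k<N. c k = 0)"
    obtain x where x: "\<forall>s\<in>S. (\<Sum>k<N. x k * Q s k) = - Q s N"
      using square_system_solvable_if_injective[OF S inj, where y = "\<lambda>s. - Q s N"] by (rule exE)
    define c where "c k = (if k < N then x k else if k = N then 1 else 0)" for k
    have "?monic c"
      unfolding monic_iff using x by (simp add: c_def)
    moreover have "d = c" if d: "?monic d" for d
    proof
      fix k
      have kernel: "?kernel (\<lambda>k. d k - c k)"
        using d \<open>?monic c\<close> by (simp add: monic_iff left_diff_distrib sum_subtractf)
      have "k < N \<Longrightarrow> d k = c k"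
        using mp[OF spec[OF inj, of "\<lambda>k. d k - c k"] kernel] by simp
      then show "d k = c k"
        using d \<open>?monic c\<close> by (cases k N rule: linorder_cases) (auto simp: monic_iff)
    qed
    ultimately show "\<exists>!c. ?monic c"
      by (rule ex1I)
  qed
qed

lemma exists_nonzero_orthogonal_hspan_iff:
  assumes "\<And>j. j < r \<Longrightarrow> circle_measure (mus j)"
  shows "(\<exists>X \<in> hspan t0 lo N. X \<noteq> (\<lambda>z. 0)
            \<and> (\<forall>j<r. \<forall>i<ns j. integral\<^sup>L (mus j) (\<lambda>z. X z * hpow t0 (m j i) z) = 0))
     \<longleftrightarrow> (\<exists>c. (\<exists>b<N. c b \<noteq> 0)
            \<and> (\<forall>j<r. \<forall>i<ns j. (\<Sum>b<N. c b * integral\<^sup>L (mus j) (hpow t0 (lo + 2 * int b + m j i))) = 0))"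
proof -
  have orth: "integral\<^sup>L (mus j) (\<lambda>z. (\<Sum>b<N. c b * hpow t0 (lo + 2 * int b) z) * hpow t0 (m j i) z)
      = (\<Sum>b<N. c b * integral\<^sup>L (mus j) (hpow t0 (lo + 2 * int b + m j i)))" if "j < r" for c j i
    by (rule integral_hpow_combination[OF assms[OF that]])
  show ?thesis
  proof
    assume "\<exists>X \<in> hspan t0 lo N. X \<noteq> (\<lambda>z. 0)
      \<and> (\<forall>j<r. \<forall>i<ns j. integral\<^sup>L (mus j) (\<lambda>z. X z * hpow t0 (m j i) z) = 0)"
    then obtain c where "(\<lambda>z. \<Sum>b<N. c b * hpow t0 (lo + 2 * int b) z) \<noteq> (\<lambda>z. 0)"
      and "\<forall>j<r. \<forall>i<ns j. integral\<^sup>L (mus j)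
             (\<lambda>z. (\<Sum>b<N. c b * hpow t0 (lo + 2 * int b) z) * hpow t0 (m j i) z) = 0"
      unfolding hspan_def by blast
    then show "\<exists>c. (\<exists>b<N. c b \<noteq> 0)
      \<and> (\<forall>j<r. \<forall>i<ns j. (\<Sum>b<N. c b * integral\<^sup>L (mus j) (hpow t0 (lo + 2 * int b + m j i))) = 0)"
      by (auto simp: hpow_sum_eq_zero_iff orth)
  next
    assume "\<exists>c. (\<exists>b<N. c b \<noteq> 0)
      \<and> (\<forall>j<r. \<forall>i<ns j. (\<Sum>b<N. c b * integral\<^sup>L (mus j) (hpow t0 (lo + 2 * int b + m j i))) = 0)"
    then obtain c where "\<exists>b<N. c b \<noteq> 0"
      and "\<forall>j<r. \<forall>i<ns j. (\<Sum>b<N. c b * integral\<^sup>L (mus j) (hpow t0 (lo + 2 * int b + m j i))) = 0"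
      by blast
    then show "\<exists>X \<in> hspan t0 lo N. X \<noteq> (\<lambda>z. 0)
      \<and> (\<forall>j<r. \<forall>i<ns j. integral\<^sup>L (mus j) (\<lambda>z. X z * hpow t0 (m j i) z) = 0)"
      by (intro bexI[of _ "\<lambda>z. \<Sum>b<N. c b * hpow t0 (lo + 2 * int b) z"])
        (auto simp: hspan_def hpow_sum_eq_zero_iff orth)
  qed
qed

lemma exists_nonzero_symmetric_orthogonal_hspan_iff:
  assumes mus: "\<And>j. j < r \<Longrightarrow> circle_measure (mus j)" and \<tau>: "norm \<tau> = 1"
  shows "(\<exists>X \<in> hspan t0 (1 - int N) N. X \<noteq> (\<lambda>z. 0)
            \<and> (\<forall>z. z \<noteq> 0 \<longrightarrow> X z = \<tau> * cnj (X (1 / cnj z)))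
            \<and> (\<forall>j<r. \<forall>i<ns j. integral\<^sup>L (mus j) (\<lambda>z. X z * hpow t0 (int (ns j) - 1 - 2 * int i) z) = 0))
     \<longleftrightarrow> (\<exists>X \<in> hspan t0 (1 - int N) N. X \<noteq> (\<lambda>z. 0)
            \<and> (\<forall>j<r. \<forall>i<ns j. integral\<^sup>L (mus j) (\<lambda>z. X z * hpow t0 (int (ns j) - 1 - 2 * int i) z) = 0))"
    (is "(\<exists>X \<in> ?H. _ \<and> _ \<and> ?orth X) \<longleftrightarrow> _")
proof
  assume "\<exists>X \<in> ?H. X \<noteq> (\<lambda>z. 0) \<and> ?orth X"
  then obtain X where X: "X \<in> ?H" "X \<noteq> (\<lambda>z. 0)" "?orth X"
    by blast
  define V where "V = {X \<in> ?H. ?orth X}"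
  define \<sigma> :: "(complex \<Rightarrow> complex) \<Rightarrow> complex \<Rightarrow> complex"
    where "\<sigma> = (\<lambda>X z. \<tau> * cnj (X (1 / cnj z)))"
  have integrable: "integrable (mus j) (\<lambda>z. X z * hpow t0 k z)" if "X \<in> ?H" "j < r" for X j k
    by (rule integrable_hspan_mult_hpow[OF mus[OF that(2)] that(1)])
  have "\<exists>Y\<in>V. Y \<noteq> (\<lambda>z. 0) \<and> \<sigma> Y = Y"
  proof (rule exists_nonzero_fixed_point_antilinear_involution)
    show "(\<lambda>z. X z + Y z) \<in> V" if "X \<in> V" "Y \<in> V" for X Y
      using that by (simp add: V_def hspan_add distrib_right integrable)
    show "(\<lambda>z. \<i> * X z) \<in> V" if "X \<in> V" for X
      using that by (simp add: V_def hspan_scale mult.assoc)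
    show "\<sigma> X \<in> V" if "X \<in> V" for X
    proof -
      have "integral\<^sup>L (mus j) (\<lambda>z. \<sigma> X z * hpow t0 (int (ns j) - 1 - 2 * int i) z) = 0"
        if "j < r" "i < ns j" for j i
      proof -
        have XH: "X \<in> ?H" and orth: "?orth X"
          using \<open>X \<in> V\<close> by (simp_all add: V_def)
        have reflected: "- (int (ns j) - 1 - 2 * int i) = int (ns j) - 1 - 2 * int (ns j - 1 - i)"
          using that(2) by (simp add: of_nat_diff)
        have "integral\<^sup>L (mus j) (\<lambda>z. \<sigma> X z * hpow t0 (int (ns j) - 1 - 2 * int i) z)
            = \<tau> * cnj (integral\<^sup>L (mus j) (\<lambda>z. X z * hpow t0 (int (ns j) - 1 - 2 * int (ns j - 1 - i)) z))"
          unfolding \<sigma>_def reflected[symmetric]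
          by (rule integral_reflect_mult_hpow[OF mus[OF that(1)] borel_measurable_hspan[OF XH]])
        also have "\<dots> = 0"
        proof -
          have "ns j - 1 - i < ns j"
            using that(2) by simp
          then have "integral\<^sup>L (mus j) (\<lambda>z. X z * hpow t0 (int (ns j) - 1 - 2 * int (ns j - 1 - i)) z) = 0"
            using orth that(1) by blast
          then show ?thesis
            by (simp only: complex_cnj_zero mult_zero_right)
        qed
        finally show ?thesis .
      qed
      then show ?thesis
        using \<open>X \<in> V\<close> by (simp add: V_def \<sigma>_def hspan_reflect)
    qed
    show "\<sigma> (\<lambda>z. X z + Y z) = (\<lambda>z. \<sigma> X z + \<sigma> Y z)" for X Y
      by (simp add: \<sigma>_def distrib_left)
    show "\<sigma> (\<lambda>z. \<i> * X z) = (\<lambda>z. - \<i> * \<sigma> X z)" for X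
      by (simp add: \<sigma>_def fun_eq_iff)
    show "\<sigma> (\<sigma> X) = X" for X
      using complex_norm_square[of \<tau>] \<tau> by (simp add: \<sigma>_def fun_eq_iff mult.assoc[symmetric])
    show "X \<in> V" "X \<noteq> (\<lambda>z. 0)"
      using X by (simp_all add: V_def)
  qed
  then show "\<exists>X \<in> ?H. X \<noteq> (\<lambda>z. 0) \<and> (\<forall>z. z \<noteq> 0 \<longrightarrow> X z = \<tau> * cnj (X (1 / cnj z))) \<and> ?orth X"
    unfolding V_def \<sigma>_def by (auto simp: fun_eq_iff)
qed blast

lemma phi_normal_iff_trivial_kernel:
  fixes t0 :: real and r :: nat and mus :: "nat \<Rightarrow> complex measure" and ns :: "nat \<Rightarrow> nat"
  defines "N \<equiv> total r ns"
  assumes mus: "\<And>j. j < r \<Longrightarrow> circle_measure (mus j)"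
  shows "phi_normal t0 r mus ns \<longleftrightarrow> (\<forall>c. (\<forall>j<r. \<forall>i<ns j.
      (\<Sum>b<N. c b * integral\<^sup>L (mus j) (hpow t0 (1 - int N + 2 * int b + (int (ns j) - 1 - 2 * int i)))) = 0)
        \<longrightarrow> (\<forall>b<N. c b = 0))"
proof -
  define S where "S = (SIGMA j:{..<r}. {..<ns j})"
  define Q where "Q = (\<lambda>(j, i) b. integral\<^sup>L (mus j) (hpow t0 (1 - int N + 2 * int b + (int (ns j) - 1 - 2 * int i))))"
  have S: "finite S" "card S = N"
    unfolding S_def N_def total_def by (simp_all add: card_SigmaI)
  have ball_S: "(\<forall>s\<in>S. P s) \<longleftrightarrow> (\<forall>j<r. \<forall>i<ns j. P (j, i))" for P
    unfolding S_def by auto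
  have "integral\<^sup>L (mus j) (\<lambda>z. (\<Sum>k\<le>N. c k * hpow t0 (2 * int k - int N) z) * hpow t0 (int (ns j) - 2 * int i) z)
      = (\<Sum>k\<le>N. c k * Q (j, i) k)" if "j < r" for c j i
    unfolding integral_hpow_combination[OF mus[OF that]] Q_def by (simp add: algebra_simps)
  then have "phi_normal t0 r mus ns
      \<longleftrightarrow> N = 0 \<or> (\<exists>!c. (\<forall>k>N. c k = 0) \<and> c N = 1 \<and> (\<forall>s\<in>S. (\<Sum>k\<le>N. c k * Q s k) = 0))"
    unfolding phi_normal_def N_def[symmetric] by (simp add: ball_S)
  also have "\<dots> \<longleftrightarrow> (\<forall>c. (\<forall>s\<in>S. (\<Sum>k<N. c k * Q s k) = 0) \<longrightarrow> (\<forall>k<N. c k = 0))"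
    using unique_monic_solution_iff_injective[OF S, of Q] by auto
  finally show ?thesis
    unfolding ball_S Q_def by simp
qed

theorem proposition3p3:
  fixes t0 :: real and r :: nat and mus :: "nat \<Rightarrow> complex measure"
    and ns :: "nat \<Rightarrow> nat" and \<tau> :: complex
  assumes "\<And>j. j < r \<Longrightarrow> circle_measure (mus j)"
    and "norm \<tau> = 1"
  shows "phi_normal t0 r mus ns \<longleftrightarrow>
    \<not> (\<exists>X \<in> hspan t0 (1 - int (total r ns)) (total r ns).
          X \<noteq> (\<lambda>z. 0)
        \<and> (\<forall>z. z \<noteq> 0 \<longrightarrow> X z = \<tau> * cnj (X (1 / cnj z)))
        \<and> (\<forall>j<r. \<forall>i<ns j.
             integral\<^sup>L (mus j) (\<lambda>z. X z * hpow t0 (int (ns j) - 1 - 2 * int i) z) = 0))"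
proof -
  let ?N = "total r ns"
  have "phi_normal t0 r mus ns \<longleftrightarrow> \<not> (\<exists>X \<in> hspan t0 (1 - int ?N) ?N. X \<noteq> (\<lambda>z. 0)
      \<and> (\<forall>j<r. \<forall>i<ns j. integral\<^sup>L (mus j) (\<lambda>z. X z * hpow t0 (int (ns j) - 1 - 2 * int i) z) = 0))"
    using phi_normal_iff_trivial_kernel[OF assms(1)]
      exists_nonzero_orthogonal_hspan_iff[OF assms(1), where lo = "1 - int ?N" and N = ?N
        and ns = ns and m = "\<lambda>j i. int (ns j) - 1 - 2 * int i"]
    by auto
  then show ?thesis
    using exists_nonzero_symmetric_orthogonal_hspan_iff[where mus = mus, OF assms] by simp
qed

end
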